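(* Let $\mathcal{D}$ be a probability distribution over triples $(x,y,z)$, and let $S=\{(x_1,y_1,z_1),\dots,(x_N,y_N,z_N)\}$ be a finite sample. For parameters $u\in\mathcal{U}$, $v\in\mathcal{V}$, $w\in\mathcal{W}$ and $\rho>0$, define the joint loss $$l_J(x,y,z;u,v,w) = -l_p(h_p(g(x;u);v),y) + \rho\, l_u(h_u(g(x;u);w),z).$$ Let $(u^\ast,v^\ast,w^\ast)$ be a solution of the expected-risk problem, i.e. $v^\ast=v^\ast(u^\ast)$, $w^\ast=w^\ast(u^\ast)$ and $u^\ast$ minimizes $u\mapsto E_{\mathcal{D}}[l_J(u,v^\ast(u),w^\ast(u))]$, where $v^\ast(u)\in\arg\max_v E_{\mathcal{D}}[-l_p(u,v)]$ and $w^\ast(u)\in\arg\min_w E_{\mathcal{D}}[l_u(u,w)]$; equivalently $$E_{\mathcal{D}}[l_J(u^\ast,v^\ast,w^\ast)] = \min_u\Big[\max_v E_{\mathcal{D}}[-l_p(u,v)] + \rho\min_w E_{\mathcal{D}}[l_u(u,w)]\Big].$$ Let $(\hat u,\hat v,\hat w)$ be the analogous solution of the empirical problem, with $E_{\mathcal{D}}$ replaced by the empirical mean $E_S$ (so $\hat v=\hat v(\hat u)$, $\hat w=\hat w(\hat u)$ with $\hat v(u)\in\arg\max_v E_S[-l_p(u,v)]$, $\hat w(u)\in\arg\min_w E_S[l_u(u,w)]$, and $\hat u$ minimizes $u\mapsto E_S[l_J(u,\hat v(u),\hat w(u))]$). Then $$\big| E_{\mathcal{D}}[l_J(\hat u,\hat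 v,\hat w)] - E_{\mathcal{D}}[l_J(u^\ast,v^\ast,w^\ast)]\big| \le 2\sup_{u,v,w}\big| E_{\mathcal{D}}[l_J(u,v,w)] - E_S[l_J(u,v,w)]\big|.$$
   Context: Setting: $\mathcal{X}\subset\mathbb{R}^D$ is a feature space; $y$ is a private variable and $z$ a target variable. A filter $g(\cdot;u):\mathcal{X}\to\mathbb{R}^d$ is parameterized by $u\in\mathcal{U}$; predictors $h_p(\cdot;v)$ ($v\in\mathcal{V}$) and $h_u(\cdot;w)$ ($w\in\mathcal{W}$) act on filter outputs; $l_p,l_u$ are real-valued loss functions. The sets $\mathcal{U},\mathcal{V},\mathcal{W}$ are compact convex subsets of Euclidean spaces, and $g,h_p,h_u,l_p,l_u$ are continuous, so that all minima/maxima are attained. Notation: $l_p(u,v)$ stands for the random quantity $l_p(h_p(g(x;u);v),y)$, $l_u(u,w)$ for $l_u(h_u(g(x;u);w),z)$, and $l_J(u,v,w)$ for $l_J(x,y,z;u,v,w)$. $E_{\mathcal{D}}[\cdot]$ denotes expectation with $(x,y,z)\sim\mathcal{D}$, and $E_S[f]=\frac1N\sum_{(x,y,z)\in S} f(x,y,z)$ the empirical mean over $S$. *)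

theory Defs
  imports "HOL-Probability.Probability"
begin

definition lossP ::
  "('p \<Rightarrow> 'y \<Rightarrow> real) \<Rightarrow> ('f \<Rightarrow> 'v \<Rightarrow> 'p) \<Rightarrow> ('x \<Rightarrow> 'u \<Rightarrow> 'f)
   \<Rightarrow> 'u \<Rightarrow> 'v \<Rightarrow> 'x \<times> 'y \<times> 'z \<Rightarrow> real" where
  "lossP lp hp g u v t = lp (hp (g (fst t) u) v) (fst (snd t))"

definition lossU ::
  "('q \<Rightarrow> 'z \<Rightarrow> real) \<Rightarrow> ('f \<Rightarrow> 'w \<Rightarrow> 'q) \<Rightarrow> ('x \<Rightarrow> 'u \<Rightarrow> 'f)
   \<Rightarrow> 'u \<Rightarrow> 'w \<Rightarrow> 'x \<times> 'y \<times> 'z \<Rightarrow> real" where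
  "lossU lu hu g u w t = lu (hu (g (fst t) u) w) (snd (snd t))"

definition lossJ ::
  "('p \<Rightarrow> 'y \<Rightarrow> real) \<Rightarrow> ('q \<Rightarrow> 'z \<Rightarrow> real) \<Rightarrow> ('f \<Rightarrow> 'v \<Rightarrow> 'p) \<Rightarrow> ('f \<Rightarrow> 'w \<Rightarrow> 'q)
   \<Rightarrow> ('x \<Rightarrow> 'u \<Rightarrow> 'f) \<Rightarrow> real \<Rightarrow> 'u \<Rightarrow> 'v \<Rightarrow> 'w \<Rightarrow> 'x \<times> 'y \<times> 'z \<Rightarrow> real" where
  "lossJ lp lu hp hu g \<rho> u v w t = - lossP lp hp g u v t + \<rho> * lossU lu hu g u w t"

definition ED :: "'a measure \<Rightarrow> ('a \<Rightarrow> real) \<Rightarrow> real" where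
  "ED D f = (\<integral>t. f t \<partial>D)"

definition ES :: "'a list \<Rightarrow> ('a \<Rightarrow> real) \<Rightarrow> real" where
  "ES S f = (\<Sum>t\<leftarrow>S. f t) / real (length S)"

text \<open>(u,v,w) solves the nested min-max problem for the averaging functional E
  (E = ED D for the expected-risk problem, E = ES S for the empirical one):
  v = vs(u), w = ws(u) where vs(u') is an argmax of v' |-> E[-l_p(u',v')],
  ws(u') is an argmin of w' |-> E[l_u(u',w')], and u minimises
  u' |-> E[l_J(u', vs u', ws u')].\<close>
definition is_solution ::
  "(('x \<times> 'y \<times> 'z \<Rightarrow> real) \<Rightarrow> real)
   \<Rightarrow> ('p \<Rightarrow> 'y \<Rightarrow> real) \<Rightarrow> ('q \<Rightarrow> 'z \<Rightarrow> real) \<Rightarrow> ('f \<Rightarrow> 'v \<Rightarrow> 'p) \<Rightarrow> ('f \<Rightarrow> 'w \<Rightarrow> 'q)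
   \<Rightarrow> ('x \<Rightarrow> 'u \<Rightarrow> 'f) \<Rightarrow> real \<Rightarrow> 'u set \<Rightarrow> 'v set \<Rightarrow> 'w set
   \<Rightarrow> 'u \<Rightarrow> 'v \<Rightarrow> 'w \<Rightarrow> bool" where
  "is_solution E lp lu hp hu g \<rho> U V W u v w \<longleftrightarrow>
     u \<in> U \<and>
     (\<exists>vs ws.
        (\<forall>u'\<in>U. vs u' \<in> V \<and>
                  (\<forall>v'\<in>V. E (\<lambda>t. - lossP lp hp g u' v' t) \<le> E (\<lambda>t. - lossP lp hp g u' (vs u') t))) \<and>
        (\<forall>u'\<in>U. ws u' \<in> W \<and>
                  (\<forall>w'\<in>W. E (lossU lu hu g u' (ws u')) \<le> E (lossU lu hu g u' w'))) \<and>
        v = vs u \<and> w = ws u \<and>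
        (\<forall>u'\<in>U. E (lossJ lp lu hp hu g \<rho> u v w) \<le> E (lossJ lp lu hp hu g \<rho> u' (vs u') (ws u'))))"

end

theory Submission
  imports Defs
begin

(* The usual two-sided comparison of empirical and expected minimisers, carried out for the nested
   problem. Because l_J is the private part plus rho times the utility part, swapping the inner
   optimiser of one problem for that of the other only moves the objective in the favourable
   direction. Writing (u_S, v_S, w_S) and (u_D, v_D, w_D) for the empirical and expected solutions
   (with inner optimisers v_S(.), w_S(.)) and m for a bound on |E_D l_J - E_S l_J| over U x V x W:
     E_D l_J(u_S, v_S, w_S) <= E_S l_J(u_S, v_S, w_S) + m <= E_S l_J(u_D, v_S(u_D), w_S(u_D)) + m
        <= E_S l_J(u_D, v_S(u_D), w_D) + m <= E_D l_J(u_D, v_S(u_D), w_D) + 2m <= E_D l_J(u_D, v_D, w_D) + 2m,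
   and symmetrically from below. Compactness and continuity only guarantee that the optima exist;
   the argument uses the solutions directly and never needs them. *)

lemma is_solutionE:
  assumes "is_solution E lp lu hp hu g \<rho> U V W u v w"
  obtains vs ws where "u \<in> U" "v = vs u" "w = ws u"
    and "\<And>u'. u' \<in> U \<Longrightarrow> vs u' \<in> V"
    and "\<And>u' v'. u' \<in> U \<Longrightarrow> v' \<in> V \<Longrightarrow>
           E (\<lambda>t. - lossP lp hp g u' v' t) \<le> E (\<lambda>t. - lossP lp hp g u' (vs u') t)"
    and "\<And>u'. u' \<in> U \<Longrightarrow> ws u' \<in> W"
    and "\<And>u' w'. u' \<in> U \<Longrightarrow> w' \<in> W \<Longrightarrow> E (lossU lu hu g u' (ws u')) \<le> E (lossU lu hu g u' w')"
    and "\<And>u'. u' \<in> U \<Longrightarrow>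
           E (lossJ lp lu hp hu g \<rho> u v w) \<le> E (lossJ lp lu hp hu g \<rho> u' (vs u') (ws u'))"
  using assms unfolding is_solution_def by blast

lemma ES_lossJ:
  "ES S (lossJ lp lu hp hu g \<rho> u v w)
     = ES S (\<lambda>t. - lossP lp hp g u v t) + \<rho> * ES S (lossU lu hu g u w)"
proof -
  have "(\<Sum>t\<leftarrow>S. - a t + c * b t) = (\<Sum>t\<leftarrow>S. - a t) + c * (\<Sum>t\<leftarrow>S. b t)"
    for a b :: "_ \<Rightarrow> real" and c
    by (induction S) (auto simp: algebra_simps)
  then show ?thesis
    unfolding ES_def lossJ_def by (simp add: add_divide_distrib)
qed

lemma ED_lossJ:
  assumes "integrable D (lossP lp hp g u v)" "integrable D (lossU lu hu g u w)"
  shows "ED D (lossJ lp lu hp hu g \<rho> u v w)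
           = ED D (\<lambda>t. - lossP lp hp g u v t) + \<rho> * ED D (lossU lu hu g u w)"
  unfolding ED_def lossJ_def using assms by simp

lemma is_solution_excess_risk_le:
  fixes E1 E2 :: "('x \<times> 'y \<times> 'z \<Rightarrow> real) \<Rightarrow> real"
    and lp :: "'p \<Rightarrow> 'y \<Rightarrow> real" and lu :: "'q \<Rightarrow> 'z \<Rightarrow> real"
    and hp :: "'f \<Rightarrow> 'v \<Rightarrow> 'p" and hu :: "'f \<Rightarrow> 'w \<Rightarrow> 'q"
    and g :: "'x \<Rightarrow> 'u \<Rightarrow> 'f" and \<rho> :: real
  defines "J \<equiv> lossJ lp lu hp hu g \<rho>"
  assumes split1: "\<And>u v w. u \<in> U \<Longrightarrow> v \<in> V \<Longrightarrow> w \<in> W \<Longrightarrow>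
             E1 (J u v w) = E1 (\<lambda>t. - lossP lp hp g u v t) + \<rho> * E1 (lossU lu hu g u w)"
    and split2: "\<And>u v w. u \<in> U \<Longrightarrow> v \<in> V \<Longrightarrow> w \<in> W \<Longrightarrow>
             E2 (J u v w) = E2 (\<lambda>t. - lossP lp hp g u v t) + \<rho> * E2 (lossU lu hu g u w)"
    and "\<rho> \<ge> 0"
    and dev: "\<And>u v w. u \<in> U \<Longrightarrow> v \<in> V \<Longrightarrow> w \<in> W \<Longrightarrow> \<bar>E1 (J u v w) - E2 (J u v w)\<bar> \<le> m"
    and sol1: "is_solution E1 lp lu hp hu g \<rho> U V W us vs ws"
    and sol2: "is_solution E2 lp lu hp hu g \<rho> U V W uh vh wh"
  shows "\<bar>E1 (J uh vh wh) - E1 (J us vs ws)\<bar> \<le> 2 * m"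
proof -
  obtain v1 w1 where us: "us \<in> U" and vs: "vs = v1 us" and ws: "ws = w1 us"
    and v1: "\<And>u. u \<in> U \<Longrightarrow> v1 u \<in> V"
    and v1_max: "\<And>u v. u \<in> U \<Longrightarrow> v \<in> V \<Longrightarrow>
                   E1 (\<lambda>t. - lossP lp hp g u v t) \<le> E1 (\<lambda>t. - lossP lp hp g u (v1 u) t)"
    and w1: "\<And>u. u \<in> U \<Longrightarrow> w1 u \<in> W"
    and w1_min: "\<And>u w. u \<in> U \<Longrightarrow> w \<in> W \<Longrightarrow> E1 (lossU lu hu g u (w1 u)) \<le> E1 (lossU lu hu g u w)"
    and us_min: "\<And>u. u \<in> U \<Longrightarrow> E1 (J us vs ws) \<le> E1 (J u (v1 u) (w1 u))"
    using sol1 unfolding J_def by (elim is_solutionE) blast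
  obtain v2 w2 where uh: "uh \<in> U" and vh: "vh = v2 uh" and wh: "wh = w2 uh"
    and v2: "\<And>u. u \<in> U \<Longrightarrow> v2 u \<in> V"
    and v2_max: "\<And>u v. u \<in> U \<Longrightarrow> v \<in> V \<Longrightarrow>
                   E2 (\<lambda>t. - lossP lp hp g u v t) \<le> E2 (\<lambda>t. - lossP lp hp g u (v2 u) t)"
    and w2: "\<And>u. u \<in> U \<Longrightarrow> w2 u \<in> W"
    and w2_min: "\<And>u w. u \<in> U \<Longrightarrow> w \<in> W \<Longrightarrow> E2 (lossU lu hu g u (w2 u)) \<le> E2 (lossU lu hu g u w)"
    and uh_min: "\<And>u. u \<in> U \<Longrightarrow> E2 (J uh vh wh) \<le> E2 (J u (v2 u) (w2 u))"
    using sol2 unfolding J_def by (elim is_solutionE) blast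
  have "E1 (J uh vh wh) \<le> E2 (J uh vh wh) + m"
    using dev[of uh vh wh] uh v2 w2 vh wh by simp
  also have "\<dots> \<le> E2 (J us (v2 us) (w2 us)) + m"
    using uh_min us by simp
  also have "\<dots> \<le> E2 (J us (v2 us) ws) + m"
    using split2 w2_min[of us ws] us v2 w1 w2 ws \<open>\<rho> \<ge> 0\<close> by (simp add: mult_left_mono)
  also have "\<dots> \<le> E1 (J us (v2 us) ws) + 2 * m"
    using dev[of us "v2 us" ws] us v2 w1 ws by simp
  also have "\<dots> \<le> E1 (J us vs ws) + 2 * m"
    using split1 v1_max[of us "v2 us"] us v1 v2 w1 vs ws by simp
  finally have upper: "E1 (J uh vh wh) \<le> E1 (J us vs ws) + 2 * m" .
  have "E1 (J us vs ws) \<le> E1 (J uh (v1 uh) (w1 uh))"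
    using us_min uh by simp
  also have "\<dots> \<le> E1 (J uh (v1 uh) wh)"
    using split1 w1_min[of uh wh] uh v1 w1 w2 wh \<open>\<rho> \<ge> 0\<close> by (simp add: mult_left_mono)
  also have "\<dots> \<le> E2 (J uh (v1 uh) wh) + m"
    using dev[of uh "v1 uh" wh] uh v1 w2 wh by simp
  also have "\<dots> \<le> E2 (J uh vh wh) + m"
    using split2 v2_max[of uh "v1 uh"] uh v1 v2 w2 vh wh by simp
  also have "\<dots> \<le> E1 (J uh vh wh) + 2 * m"
    using dev[of uh vh wh] uh v2 w2 vh wh by simp
  finally have lower: "E1 (J us vs ws) \<le> E1 (J uh vh wh) + 2 * m" .
  show ?thesis
    using upper lower by linarith
qed

lemma ereal_le_mult_SUP:
  fixes f :: "'a \<Rightarrow> real"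
  assumes "A \<noteq> {}" "k > 0"
    and bound: "\<And>m. (\<And>x. x \<in> A \<Longrightarrow> f x \<le> m) \<Longrightarrow> c \<le> k * m"
  shows "ereal c \<le> ereal k * (SUP x\<in>A. ereal (f x))"
proof (cases "SUP x\<in>A. ereal (f x)")
  case (real m)
  then have "f x \<le> m" if "x \<in> A" for x
    using SUP_upper[OF that, of "\<lambda>x. ereal (f x)"] by simp
  then show ?thesis
    using bound real by simp
next
  case PInf
  then show ?thesis
    using \<open>k > 0\<close> by simp
next
  case MInf
  moreover obtain x where "x \<in> A"
    using \<open>A \<noteq> {}\<close> by blast
  ultimately show ?thesis
    using SUP_upper[of x A "\<lambda>x. ereal (f x)"] by simp
qed

theorem theorem1:
  fixes X :: "'x::euclidean_space set"
    and U :: "'u::euclidean_space set" and V :: "'v::euclidean_space set"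
    and W :: "'w::euclidean_space set"
    and g :: "'x \<Rightarrow> 'u \<Rightarrow> 'f::euclidean_space"
    and hp :: "'f \<Rightarrow> 'v \<Rightarrow> 'p::topological_space"
    and hu :: "'f \<Rightarrow> 'w \<Rightarrow> 'q::topological_space"
    and lp :: "'p \<Rightarrow> 'y::topological_space \<Rightarrow> real"
    and lu :: "'q \<Rightarrow> 'z::topological_space \<Rightarrow> real"
    and D :: "('x \<times> 'y \<times> 'z) measure"
    and S :: "('x \<times> 'y \<times> 'z) list"
    and \<rho> :: real
    and us vs ws uh vh wh
  assumes "compact U" "convex U" "compact V" "convex V" "compact W" "convex W"
    and "continuous_on (X \<times> U) (\<lambda>(x, u). g x u)"
    and "continuous_on (UNIV \<times> V) (\<lambda>(f, v). hp f v)"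
    and "continuous_on (UNIV \<times> W) (\<lambda>(f, w). hu f w)"
    and "continuous_on UNIV (\<lambda>(p, y). lp p y)"
    and "continuous_on UNIV (\<lambda>(q, z). lu q z)"
    and "prob_space D"
    and "space D \<subseteq> X \<times> UNIV"
    and "\<And>u v. u \<in> U \<Longrightarrow> v \<in> V \<Longrightarrow> integrable D (lossP lp hp g u v)"
    and "\<And>u w. u \<in> U \<Longrightarrow> w \<in> W \<Longrightarrow> integrable D (lossU lu hu g u w)"
    and "S \<noteq> []" and "set S \<subseteq> X \<times> UNIV"
    and "\<rho> > 0"
    and "is_solution (ED D) lp lu hp hu g \<rho> U V W us vs ws"
    and "is_solution (ES S) lp lu hp hu g \<rho> U V W uh vh wh"
  shows "ereal \<bar>ED D (lossJ lp lu hp hu g \<rho> uh vh wh) - ED D (lossJ lp lu hp hu g \<rho> us vs ws)\<bar>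
         \<le> 2 * (SUP p \<in> U \<times> V \<times> W. ereal \<bar>ED D (lossJ lp lu hp hu g \<rho> (fst p) (fst (snd p)) (snd (snd p)))
                                    - ES S (lossJ lp lu hp hu g \<rho> (fst p) (fst (snd p)) (snd (snd p)))\<bar>)"
proof -
  let ?J = "lossJ lp lu hp hu g \<rho>"
  have "ereal \<bar>ED D (?J uh vh wh) - ED D (?J us vs ws)\<bar>
        \<le> ereal 2 * (SUP p \<in> U \<times> V \<times> W. ereal \<bar>ED D (?J (fst p) (fst (snd p)) (snd (snd p)))
                                             - ES S (?J (fst p) (fst (snd p)) (snd (snd p)))\<bar>)"
  proof (rule ereal_le_mult_SUP)
    show "U \<times> V \<times> W \<noteq> {}"
      using assms(19) unfolding is_solution_def by fast
    fix m
    assume dev: "\<And>p. p \<in> U \<times> V \<times> W \<Longrightarrow>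
      \<bar>ED D (?J (fst p) (fst (snd p)) (snd (snd p))) - ES S (?J (fst p) (fst (snd p)) (snd (snd p)))\<bar> \<le> m"
    show "\<bar>ED D (?J uh vh wh) - ED D (?J us vs ws)\<bar> \<le> 2 * m"
    proof (rule is_solution_excess_risk_le[OF _ _ _ _ assms(19,20)])
      show "ED D (?J u v w) = ED D (\<lambda>t. - lossP lp hp g u v t) + \<rho> * ED D (lossU lu hu g u w)"
        if "u \<in> U" "v \<in> V" "w \<in> W" for u v w
        using that assms(14,15) by (intro ED_lossJ)
      show "\<bar>ED D (?J u v w) - ES S (?J u v w)\<bar> \<le> m" if "u \<in> U" "v \<in> V" "w \<in> W" for u v w
        using that dev[of "(u, v, w)"] by simp
    qed (use \<open>\<rho> > 0\<close> ES_lossJ in simp_all)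
  qed simp
  then show ?thesis
    by simp
qed

end
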